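(* Let $V$ be a real Lorentzian vector space (signature $(1,q)$) of dimension $m=1+q\ge 3$, and let $R$ be an algebraic curvature tensor on $V$. If $\operatorname{trace}\{\mathcal{J}_R(x)^2\}=0$ for every complex null vector $x\in\mathcal{N}$, then $R$ has constant sectional curvature, i.e. there is a constant $c$ with $R(x,y,z,w)=c\{(x,w)(y,z)-(x,z)(y,w)\}$ for all $x,y,z,w\in V$.
   Context: An algebraic curvature tensor is $R\in\otimes^4V^*$ with $R(x,y,z,w)=R(z,w,x,y)=-R(y,x,z,w)$ and $R(x,y,z,w)+R(y,z,x,w)+R(z,x,y,w)=0$. The Jacobi operator $\mathcal{J}_R(x)$ is defined by $(\mathcal{J}_R(x)y,w)=R(y,x,x,w)$. The inner product, $R$ and $\mathcal{J}_R$ are extended complex-multilinearly to $V_{\mathbb{C}}=V\otimes\mathbb{C}$; $\mathcal{N}=\{v\in V_{\mathbb{C}}:(v,v)=0\}$. *)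

theory Defs
  imports "HOL-Analysis.Analysis"
begin

text \<open>Model: V = real^'n (coordinates w.r.t. a fixed basis), dim V = CARD('n).
  The inner product is given by its Gram matrix G, a 4-tensor R in (V*)^{\<otimes>4}
  by its components T i j k l = R(e_i,e_j,e_k,e_l).\<close>

definition ip :: "real^'n::finite^'n \<Rightarrow> real^'n \<Rightarrow> real^'n \<Rightarrow> real" where
  "ip G x y = (\<Sum>i\<in>UNIV. \<Sum>j\<in>UNIV. G$i$j * x$i * y$j)"

definition tens :: "('n::finite \<Rightarrow> 'n \<Rightarrow> 'n \<Rightarrow> 'n \<Rightarrow> real) \<Rightarrow> real^'n \<Rightarrow> real^'n \<Rightarrow> real^'n \<Rightarrow> real^'n \<Rightarrow> real" where
  "tens T x y z w = (\<Sum>i\<in>UNIV. \<Sum>j\<in>UNIV. \<Sum>k\<in>UNIV. \<Sum>l\<in>UNIV.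
      T i j k l * x$i * y$j * z$k * w$l)"

text \<open>Complex-multilinear extensions to V_C = complex^'n.\<close>

definition cip :: "real^'n::finite^'n \<Rightarrow> complex^'n \<Rightarrow> complex^'n \<Rightarrow> complex" where
  "cip G x y = (\<Sum>i\<in>UNIV. \<Sum>j\<in>UNIV. complex_of_real (G$i$j) * x$i * y$j)"

definition ctens :: "('n::finite \<Rightarrow> 'n \<Rightarrow> 'n \<Rightarrow> 'n \<Rightarrow> real) \<Rightarrow> complex^'n \<Rightarrow> complex^'n \<Rightarrow> complex^'n \<Rightarrow> complex^'n \<Rightarrow> complex" where
  "ctens T x y z w = (\<Sum>i\<in>UNIV. \<Sum>j\<in>UNIV. \<Sum>k\<in>UNIV. \<Sum>l\<in>UNIV.
      complex_of_real (T i j k l) * x$i * y$j * z$k * w$l)"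

text \<open>Lorentzian inner product of signature (1,q): symmetric, and congruent to
  diag(-1,1,...,1), i.e. there is a basis e_1..e_m with (e_i,e_j) = \<epsilon>_i \<delta>_ij,
  exactly one \<epsilon>_i = -1.\<close>

definition lorentzian :: "real^'n::finite^'n \<Rightarrow> bool" where
  "lorentzian G \<longleftrightarrow> transpose G = G \<and>
     (\<exists>(P::real^'n^'n) (i0::'n). invertible P \<and>
        transpose P ** G ** P = (\<chi> i j. if i = j then (if i = i0 then -1 else 1) else 0))"

definition algebraic_curvature_tensor :: "('n::finite \<Rightarrow> 'n \<Rightarrow> 'n \<Rightarrow> 'n \<Rightarrow> real) \<Rightarrow> bool" where
  "algebraic_curvature_tensor T \<longleftrightarrow>
     (\<forall>x y z w. tens T x y z w = tens T z w x y) \<and>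
     (\<forall>x y z w. tens T x y z w = - tens T y x z w) \<and>
     (\<forall>x y z w. tens T x y z w + tens T y z x w + tens T z x y w = 0)"

text \<open>Jacobi operator on V_C: the (unique, by nondegeneracy) linear map J with
  (J y, w) = R(y,x,x,w).\<close>

definition jacobi :: "real^'n::finite^'n \<Rightarrow> ('n \<Rightarrow> 'n \<Rightarrow> 'n \<Rightarrow> 'n \<Rightarrow> real) \<Rightarrow> complex^'n \<Rightarrow> complex^'n^'n" where
  "jacobi G T x = (THE J. \<forall>y w. cip G (J *v y) w = ctens T y x x w)"

definition null_cone :: "real^'n::finite^'n \<Rightarrow> (complex^'n) set" where
  "null_cone G = {v. cip G v v = 0}"

end

theory Submission
  imports Defs
begin

(*
  In a Lorentz-orthonormal frame e_1, ..., e_m with e_i0 timelike, the Jacobi operator of a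
  real vector y satisfies trace (J(y)^2) = sum_{a,b} eps_a eps_b R(e_a, y, y, e_b)^2.  For the
  null vector y = e_i0 + e_i1 the identity R(y, y, -, -) = 0 makes the rows and columns i0, i1
  cancel, leaving a sum of squares; so the hypothesis forces R(w, y, y, w) = 0 for all w
  orthogonal to y.  Every real null vector has this form in a suitable frame, hence
  R(w, x, x, w) = 0 whenever x is null and orthogonal to w.  For spacelike w, the quadratic form
  x |-> R(w, x, x, w) on the Lorentzian space orthogonal to w therefore vanishes on its null
  cone and is a multiple mu(w) of the metric.  Comparing w with two orthonormal spacelike
  vectors (here dim V >= 3 is used) shows that mu is constant, and an algebraic curvature
  tensor is determined by its values R(w, x, x, w).
*)

lemma ip_eq_inner: "ip G x y = x \<bullet> (G *v y)"
  by (simp add: ip_def inner_vec_def matrix_vector_mult_def sum_distrib_left ac_simps)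

lemma
  shows ip_add_left: "ip G (x + x') y = ip G x y + ip G x' y"
    and ip_add_right: "ip G x (y + y') = ip G x y + ip G x y'"
    and ip_diff_left: "ip G (x - x') y = ip G x y - ip G x' y"
    and ip_diff_right: "ip G x (y - y') = ip G x y - ip G x y'"
    and ip_scaleR_left: "ip G (c *\<^sub>R x) y = c * ip G x y"
  by (simp_all add: ip_eq_inner inner_add_left inner_add_right inner_diff_left inner_diff_right
      matrix_vector_right_distrib matrix_vector_mult_diff_distrib)

lemma
  shows ip_minus_left: "ip G (- x) y = - ip G x y"
    and ip_minus_right: "ip G x (- y) = - ip G x y"
    and ip_scaleR_right: "ip G x (c *\<^sub>R y) = c * ip G x y"
  by (simp_all add: ip_def sum_negf sum_distrib_left algebra_simps)

lemma ip_congruence: "ip G (A *v u) (A *v v) = ip (transpose A ** G ** A) u v"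
proof -
  have "(A *v u) \<bullet> z = u \<bullet> (transpose A *v z)" for z :: "real^_"
    by (metis dot_lmul_matrix inner_commute transpose_matrix_vector)
  from this[of "G *v (A *v v)"] show ?thesis
    by (simp only: ip_eq_inner matrix_vector_mul_assoc matrix_mul_assoc)
qed

lemma ip_axis: "ip A (axis a 1) (axis b 1) = A $ a $ b"
  by (simp add: ip_eq_inner matrix_vector_mult_basis inner_axis' column_def)

lemma ip_transpose: "ip (transpose A) u v = ip A v u"
  unfolding ip_def transpose_def by (subst sum.swap) (simp add: ac_simps)

lemma ip_sym: "transpose G = G \<Longrightarrow> ip G x y = ip G y x"
  by (metis ip_transpose)

lemma
  shows tens_add1: "tens T (x + x') y z w = tens T x y z w + tens T x' y z w"
    and tens_add2: "tens T x (y + y') z w = tens T x y z w + tens T x y' z w"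
    and tens_add3: "tens T x y (z + z') w = tens T x y z w + tens T x y z' w"
    and tens_add4: "tens T x y z (w + w') = tens T x y z w + tens T x y z w'"
  by (simp_all add: tens_def algebra_simps sum.distrib)

lemma
  shows tens_scaleR1: "tens T (c *\<^sub>R x) y z w = c * tens T x y z w"
    and tens_scaleR2: "tens T x (c *\<^sub>R y) z w = c * tens T x y z w"
    and tens_scaleR3: "tens T x y (c *\<^sub>R z) w = c * tens T x y z w"
    and tens_scaleR4: "tens T x y z (c *\<^sub>R w) = c * tens T x y z w"
  by (simp_all add: tens_def algebra_simps sum_distrib_left)

lemma
  shows tens_zero1: "tens T 0 y z w = 0"
    and tens_zero2: "tens T x 0 z w = 0"
    and tens_zero3: "tens T x y 0 w = 0"
    and tens_zero4: "tens T x y z 0 = 0"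
  by (simp_all add: tens_def)

lemma tens_sum1: "finite A \<Longrightarrow> tens T (\<Sum>a\<in>A. f a) y z w = (\<Sum>a\<in>A. tens T (f a) y z w)"
  by (induct rule: finite_induct) (simp_all add: tens_zero1 tens_add1)

lemma tens_sum4: "finite A \<Longrightarrow> tens T x y z (\<Sum>a\<in>A. f a) = (\<Sum>a\<in>A. tens T x y z (f a))"
  by (induct rule: finite_induct) (simp_all add: tens_zero4 tens_add4)

lemma ip_quadratic: "ip G (a *\<^sub>R u + b *\<^sub>R v) (a *\<^sub>R u + b *\<^sub>R v)
    = a\<^sup>2 * ip G u u + a * b * (ip G u v + ip G v u) + b\<^sup>2 * ip G v v"
  by (simp add: ip_add_left ip_add_right ip_scaleR_left ip_scaleR_right power2_eq_square
      algebra_simps)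

lemma tens_quadratic23: "tens T w (a *\<^sub>R u + b *\<^sub>R v) (a *\<^sub>R u + b *\<^sub>R v) w
    = a\<^sup>2 * tens T w u u w + a * b * (tens T w u v w + tens T w v u w) + b\<^sup>2 * tens T w v v w"
  by (simp add: tens_add2 tens_add3 tens_scaleR2 tens_scaleR3 power2_eq_square algebra_simps)

lemma tens_quadratic14: "tens T (a *\<^sub>R u + b *\<^sub>R v) x x (a *\<^sub>R u + b *\<^sub>R v)
    = a\<^sup>2 * tens T u x x u + a * b * (tens T u x x v + tens T v x x u) + b\<^sup>2 * tens T v x x v"
  by (simp add: tens_add1 tens_add4 tens_scaleR1 tens_scaleR4 power2_eq_square algebra_simps)

lemma sum3_rotate: "(\<Sum>j\<in>A. \<Sum>k\<in>B. \<Sum>l\<in>C. g j k l) = (\<Sum>l\<in>C. \<Sum>j\<in>A. \<Sum>k\<in>B. g j k l)"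
proof -
  have "(\<Sum>j\<in>A. \<Sum>k\<in>B. \<Sum>l\<in>C. g j k l) = (\<Sum>j\<in>A. \<Sum>l\<in>C. \<Sum>k\<in>B. g j k l)"
    by (intro sum.cong refl sum.swap)
  also have "\<dots> = (\<Sum>l\<in>C. \<Sum>j\<in>A. \<Sum>k\<in>B. g j k l)"
    by (rule sum.swap)
  finally show ?thesis .
qed

definition curv_matrix :: "('n::finite \<Rightarrow> 'n \<Rightarrow> 'n \<Rightarrow> 'n \<Rightarrow> real) \<Rightarrow> real^'n \<Rightarrow> real^'n^'n" where
  "curv_matrix T y = (\<chi> k l. \<Sum>i\<in>UNIV. \<Sum>j\<in>UNIV. T k i j l * y $ i * y $ j)"

lemma tens_eq_ip_curv_matrix: "tens T u y y v = ip (curv_matrix T y) u v"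
  unfolding tens_def ip_def curv_matrix_def
  by (rule sum.cong[OF refl], subst sum3_rotate)
    (simp add: sum_distrib_left sum_distrib_right mult_ac)

lemma
  assumes "algebraic_curvature_tensor T"
  shows act_antisym12: "tens T x y z w = - tens T y x z w"
    and act_pair_sym: "tens T x y z w = tens T z w x y"
    and act_bianchi: "tens T x y z w + tens T y z x w + tens T z x y w = 0"
  using assms unfolding algebraic_curvature_tensor_def by blast+

lemma act_antisym34:
  assumes "algebraic_curvature_tensor T"
  shows "tens T x y z w = - tens T x y w z"
  by (metis assms act_antisym12 act_pair_sym)

lemma
  assumes "algebraic_curvature_tensor T"
  shows act_zero12: "tens T x x z w = 0"
    and act_zero34: "tens T x y z z = 0"
  using act_antisym12[OF assms, of x x] act_antisym34[OF assms, of _ _ z z] by simp_all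

lemma act_jacobi_sym:
  assumes "algebraic_curvature_tensor T"
  shows "tens T u y y v = tens T v y y u"
  by (metis assms act_antisym12 act_antisym34 act_pair_sym minus_minus)

text \<open>Polarization gives \<open>S(v, x, y, w) = - S(w, x, y, v)\<close>, which makes \<open>S\<close> invariant under
  cyclic permutations of its first three arguments; the Bianchi identity then reads \<open>3 S = 0\<close>.\<close>

lemma curvature_form_eq_0:
  fixes S :: "'v::real_vector \<Rightarrow> 'v \<Rightarrow> 'v \<Rightarrow> 'v \<Rightarrow> real"
  assumes antisym: "\<And>x y z w. S x y z w = - S y x z w"
    and pair_sym: "\<And>x y z w. S x y z w = S z w x y"
    and bianchi: "\<And>x y z w. S x y z w + S y z x w + S z x y w = 0"
    and add1: "\<And>x x' y z w. S (x + x') y z w = S x y z w + S x' y z w"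
    and add2: "\<And>x y y' z w. S x (y + y') z w = S x y z w + S x y' z w"
    and add3: "\<And>x y z z' w. S x y (z + z') w = S x y z w + S x y z' w"
    and add4: "\<And>x y z w w'. S x y z (w + w') = S x y z w + S x y z w'"
    and sectional: "\<And>x w. S w x x w = 0"
  shows "S x y z w = 0"
proof -
  have antisym34: "S x y z w = - S x y w z" for x y z w
    by (metis antisym pair_sym)
  have symmetric23: "S w x y w = 0" for w x y
  proof -
    have "S w (x + y) (x + y) w = S w x x w + S w x y w + S w y x w + S w y y w"
      by (simp add: add2 add3)
    moreover have "S w y x w = S w x y w"
      by (metis antisym antisym34 pair_sym minus_minus)
    ultimately show ?thesis
      using sectional by simp
  qed
  have swap14: "S v x y w = - S w x y v" for v x y w
  proof -
    have "S (w + v) x y (w + v) = S w x y w + S w x y v + S v x y w + S v x y v"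
      by (simp add: add1 add4)
    then show ?thesis
      using symmetric23 by simp
  qed
  have "S y z x w = S x y z w"
    by (metis swap14 antisym pair_sym minus_minus)
  moreover have "S z x y w = S x y z w"
    by (metis swap14 antisym antisym34 pair_sym minus_minus)
  ultimately show ?thesis
    using bianchi[of x y z w] by simp
qed

definition lorentz_sign :: "'n \<Rightarrow> 'n \<Rightarrow> real" where
  "lorentz_sign i0 a = (if a = i0 then -1 else 1)"

definition lorentz_diag :: "'n::finite \<Rightarrow> real^'n^'n" where
  "lorentz_diag i0 = (\<chi> i j. if i = j then lorentz_sign i0 i else 0)"

definition lorentz_frame :: "real^'n::finite^'n \<Rightarrow> 'n \<Rightarrow> ('n \<Rightarrow> real^'n) \<Rightarrow> bool" where
  "lorentz_frame G i0 p \<longleftrightarrow> (\<forall>a b. ip G (p a) (p b) = (if a = b then lorentz_sign i0 a else 0))"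

definition frame_matrix :: "('n::finite \<Rightarrow> real^'n) \<Rightarrow> real^'n^'n" where
  "frame_matrix p = (\<chi> k a. p a $ k)"

lemma frame_matrix_axis: "frame_matrix p *v axis a 1 = p a"
  by (simp add: frame_matrix_def matrix_vector_mult_basis column_def)

lemma frame_matrix_columns: "frame_matrix (\<lambda>a. P *v axis a 1) = P"
  by (simp add: frame_matrix_def matrix_vector_mult_basis column_def vec_eq_iff)

lemma frame_matrix_mult: "frame_matrix p *v c = (\<Sum>a\<in>UNIV. c $ a *\<^sub>R p a)"
  by (simp add: frame_matrix_def matrix_vector_mult_def vec_eq_iff sum_component mult.commute)

lemma frame_gram_entry:
  "(transpose (frame_matrix p) ** G ** frame_matrix p) $ a $ b = ip G (p a) (p b)"
  by (simp add: frame_matrix_axis flip: ip_axis ip_congruence)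

lemma lorentz_frame_iff:
  "lorentz_frame G i0 p \<longleftrightarrow> transpose (frame_matrix p) ** G ** frame_matrix p = lorentz_diag i0"
  by (simp add: lorentz_frame_def vec_eq_iff lorentz_diag_def frame_gram_entry)

lemma lorentzian_imp_frame:
  fixes G :: "real^'n::finite^'n"
  assumes "lorentzian G"
  obtains i0 p where "lorentz_frame G i0 p"
proof -
  from assms obtain P :: "real^'n^'n" and i0 where "transpose P ** G ** P = lorentz_diag i0"
    unfolding lorentzian_def lorentz_diag_def lorentz_sign_def by blast
  then have "lorentz_frame G i0 (\<lambda>a. P *v axis a 1)"
    by (simp add: lorentz_frame_iff frame_matrix_columns)
  then show ?thesis ..
qed

lemma lorentzian_ip_sym: "lorentzian G \<Longrightarrow> ip G x y = ip G y x"
  by (simp add: lorentzian_def ip_sym)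

lemma lorentz_diag_square: "lorentz_diag i0 ** lorentz_diag i0 = mat 1"
  by (simp add: lorentz_diag_def lorentz_sign_def matrix_matrix_mult_def mat_def vec_eq_iff
      if_distrib[of "\<lambda>x. x * _"] sum.delta cong: if_cong)

lemma lorentz_frame_left_inverse:
  assumes "lorentz_frame G i0 p"
  shows "(frame_matrix p ** lorentz_diag i0 ** transpose (frame_matrix p)) ** G = mat 1"
proof -
  let ?P = "frame_matrix p" and ?D = "lorentz_diag i0"
  have "(transpose ?P ** G) ** (?P ** ?D) = (transpose ?P ** G ** ?P) ** ?D"
    by (simp add: matrix_mul_assoc)
  also have "\<dots> = mat 1"
    using assms lorentz_diag_square by (simp add: lorentz_frame_iff)
  finally have "(?P ** ?D) ** (transpose ?P ** G) = mat 1"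
    by (simp add: matrix_left_right_inverse)
  then show ?thesis
    by (simp add: matrix_mul_assoc)
qed

lemma lorentz_frame_spans:
  assumes "lorentz_frame G i0 p"
  obtains c where "z = frame_matrix p *v c"
proof
  show "z = frame_matrix p *v ((lorentz_diag i0 ** transpose (frame_matrix p) ** G) *v z)"
    using lorentz_frame_left_inverse[OF assms]
    by (metis matrix_vector_mul_assoc matrix_mul_assoc matrix_vector_mul_lid)
qed

lemma lorentz_frame_ip:
  assumes "lorentz_frame G i0 p"
  shows "ip G (frame_matrix p *v c) (frame_matrix p *v d) = ip (lorentz_diag i0) c d"
  using assms
  by (simp add: ip_congruence lorentz_frame_iff)

definition spatial :: "'n::finite \<Rightarrow> real^'n \<Rightarrow> real^'n" where
  "spatial i0 c = (\<chi> a. if a = i0 then 0 else c $ a)"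

lemma ip_lorentz_diag: "ip (lorentz_diag i0) c d = spatial i0 c \<bullet> spatial i0 d - c $ i0 * d $ i0"
proof -
  have "ip (lorentz_diag i0) c d = (\<Sum>i\<in>UNIV. lorentz_sign i0 i * c $ i * d $ i)"
    by (simp add: ip_def lorentz_diag_def if_distrib[of "\<lambda>x. x * _"] sum.delta cong: if_cong)
  also have "\<dots> = (\<Sum>i\<in>UNIV. spatial i0 c $ i * spatial i0 d $ i) - c $ i0 * d $ i0"
    by (simp add: lorentz_sign_def spatial_def if_distrib[of "\<lambda>x. x * _"] sum.If_cases
        sum_subtractf[symmetric] cong: if_cong)
  finally show ?thesis
    by (simp add: inner_vec_def)
qed

lemma spatial_eq_0_iff: "spatial i0 z = 0 \<and> z $ i0 = 0 \<longleftrightarrow> z = 0"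
  by (auto simp: spatial_def vec_eq_iff)

text \<open>In Minkowski coordinates \<open>t = (t\<^sub>0, t')\<close>, \<open>z = (z\<^sub>0, z')\<close> with \<open>|t'| < |t\<^sub>0|\<close> and
  \<open>t\<^sub>0 z\<^sub>0 = t' \<bullet> z'\<close>, Cauchy-Schwarz gives \<open>t\<^sub>0\<^sup>2 z\<^sub>0\<^sup>2 \<le> |t'|\<^sup>2 |z'|\<^sup>2\<close>,
  which forces \<open>|z'| > |z\<^sub>0|\<close> unless \<open>z = 0\<close>.\<close>

lemma minkowski_orthogonal_timelike:
  assumes t: "ip (lorentz_diag i0) t t < 0" and tz: "ip (lorentz_diag i0) t z = 0" and "z \<noteq> 0"
  shows "ip (lorentz_diag i0) z z > 0"
proof (rule ccontr)
  define A where "A = spatial i0 t \<bullet> spatial i0 t"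
  define Z where "Z = spatial i0 z \<bullet> spatial i0 z"
  define X where "X = spatial i0 t \<bullet> spatial i0 z"
  assume "\<not> ?thesis"
  then have Z_le: "Z \<le> (z $ i0)\<^sup>2"
    by (simp add: ip_lorentz_diag Z_def power2_eq_square)
  have A_less: "A < (t $ i0)\<^sup>2"
    using t by (simp add: ip_lorentz_diag A_def power2_eq_square)
  have X_eq: "X = t $ i0 * z $ i0"
    using tz by (simp add: ip_lorentz_diag X_def)
  have cauchy_schwarz: "X\<^sup>2 \<le> A * Z"
    unfolding X_def A_def Z_def by (rule Cauchy_Schwarz_ineq)
  show False
  proof (cases "Z = 0")
    case True
    then have "X = 0"
      by (simp add: X_def Z_def)
    moreover have "t $ i0 \<noteq> 0"
      using A_less inner_ge_zero[of "spatial i0 t"] unfolding A_def by fastforce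
    ultimately have "z $ i0 = 0"
      using X_eq by simp
    with \<open>Z = 0\<close> \<open>z \<noteq> 0\<close> show False
      using spatial_eq_0_iff by (auto simp: Z_def)
  next
    case False
    then have "Z > 0"
      by (simp add: Z_def)
    have "(t $ i0)\<^sup>2 * (z $ i0)\<^sup>2 \<le> A * Z"
      using cauchy_schwarz X_eq by (simp add: power_mult_distrib)
    also have "\<dots> < (t $ i0)\<^sup>2 * Z"
      using A_less \<open>Z > 0\<close> by simp
    also have "\<dots> \<le> (t $ i0)\<^sup>2 * (z $ i0)\<^sup>2"
      using Z_le by (simp add: mult_left_mono)
    finally show False by simp
  qed
qed

lemma lorentzian_orthogonal_timelike:
  assumes "lorentzian G" and "ip G \<tau> \<tau> < 0" and "ip G \<tau> z = 0" and "z \<noteq> 0"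
  shows "ip G z z > 0"
proof -
  obtain i0 p where frame: "lorentz_frame G i0 p"
    using assms(1) by (rule lorentzian_imp_frame)
  obtain a where a: "\<tau> = frame_matrix p *v a"
    using frame by (rule lorentz_frame_spans)
  obtain b where b: "z = frame_matrix p *v b"
    using frame by (rule lorentz_frame_spans)
  have "b \<noteq> 0"
    using b \<open>z \<noteq> 0\<close> by auto
  then have "ip (lorentz_diag i0) b b > 0"
    using assms(2,3) minkowski_orthogonal_timelike[of i0 a b]
    by (simp add: a b lorentz_frame_ip[OF frame])
  then show ?thesis
    by (simp add: b lorentz_frame_ip[OF frame])
qed

definition cvec :: "real^'n::finite \<Rightarrow> complex^'n" where
  "cvec v = (\<chi> i. complex_of_real (v $ i))"

definition cmat :: "real^'n::finite^'m::finite \<Rightarrow> complex^'n^'m" where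
  "cmat A = (\<chi> i j. complex_of_real (A $ i $ j))"

definition cdot :: "complex^'n::finite \<Rightarrow> complex^'n \<Rightarrow> complex" where
  "cdot u v = (\<Sum>i\<in>UNIV. u $ i * v $ i)"

lemma cmat_mult: "cmat (A ** B) = cmat A ** cmat B"
  by (simp add: cmat_def matrix_matrix_mult_def vec_eq_iff)

lemma cmat_transpose: "transpose (cmat A) = cmat (transpose A)"
  by (simp add: cmat_def transpose_def vec_eq_iff)

lemma cmat_mat_1: "cmat (mat 1 :: real^'n::finite^'n) = mat 1"
  by (simp add: cmat_def mat_def vec_eq_iff)

lemma trace_cmat: "trace (cmat A) = complex_of_real (trace A)"
  by (simp add: cmat_def trace_def)

lemma cdot_matrix_vector_left: "cdot (A *v u) v = cdot u (transpose A *v v)"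
  unfolding cdot_def matrix_vector_mult_def transpose_def
  by (simp add: sum_distrib_left sum_distrib_right ac_simps) (rule sum.swap)

lemma cdot_axis: "cdot u (axis k 1) = u $ k"
  by (simp add: cdot_def axis_def if_distrib[of "\<lambda>x. _ * x"] sum.delta cong: if_cong)

lemma cip_eq_cdot: "cip G u v = cdot u (cmat G *v v)"
  unfolding cip_def cdot_def cmat_def matrix_vector_mult_def
  by (simp add: sum_distrib_left ac_simps)

lemma cip_cvec: "cip G (cvec u) (cvec v) = complex_of_real (ip G u v)"
  by (simp add: cip_def ip_def cvec_def)

lemma ctens_cvec: "ctens T u (cvec y) (cvec y) v = cdot u (cmat (curv_matrix T y) *v v)"
  unfolding ctens_def cdot_def
  by (rule sum.cong[OF refl], subst sum3_rotate)
    (simp add: matrix_vector_mult_def cmat_def curv_matrix_def cvec_def sum_distrib_left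
      sum_distrib_right mult_ac)

lemma cip_left_unique:
  assumes inverse: "Gi ** G = mat 1" and eq: "\<And>w. cip G u w = cip G u' w"
  shows "u = u'"
proof -
  have "u $ k = u' $ k" for k
  proof -
    have "cmat G *v (cmat Gi *v axis k 1) = axis k 1"
      using inverse by (simp add: matrix_vector_mul_assoc cmat_mat_1 matrix_left_right_inverse
          flip: cmat_mult)
    then show ?thesis
      using eq[of "cmat Gi *v axis k 1"] by (simp add: cip_eq_cdot cdot_axis)
  qed
  then show ?thesis
    by (simp add: vec_eq_iff)
qed

lemma jacobi_cvec:
  assumes inverse: "Gi ** G = mat 1" and sym: "transpose G = G"
  shows "jacobi G T (cvec y) = cmat (Gi ** transpose (curv_matrix T y))"
proof -
  let ?J = "cmat (Gi ** transpose (curv_matrix T y))"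
  have "transpose Gi ** G = mat 1"
    using inverse sym by (metis matrix_left_right_inverse matrix_transpose_mul transpose_mat)
  then have "curv_matrix T y ** transpose Gi ** G = curv_matrix T y"
    by (simp flip: matrix_mul_assoc)
  then have J: "cip G (?J *v u) w = ctens T u (cvec y) (cvec y) w" for u w
    by (simp add: cip_eq_cdot ctens_cvec cdot_matrix_vector_left cmat_transpose
        matrix_vector_mul_assoc matrix_transpose_mul matrix_mul_assoc flip: cmat_mult)
  have "J' = ?J" if "\<forall>u w. cip G (J' *v u) w = ctens T u (cvec y) (cvec y) w" for J'
    unfolding matrix_eq using that J by (metis cip_left_unique[OF inverse])
  with J show ?thesis
    unfolding jacobi_def by (intro the_equality) auto
qed

lemma act_jacobi_shift:
  assumes "algebraic_curvature_tensor T"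
  shows "tens T (u + s *\<^sub>R y) y y (v + t *\<^sub>R y) = tens T u y y v"
  by (simp add: tens_add1 tens_add4 tens_scaleR1 tens_scaleR4 act_zero12[OF assms]
      act_zero34[OF assms])

lemma lorentz_diag_mult: "(lorentz_diag i0 ** A) $ i $ j = lorentz_sign i0 i * A $ i $ j"
  by (simp add: lorentz_diag_def matrix_matrix_mult_def if_distrib[of "\<lambda>x. x * _"] sum.delta
      cong: if_cong)

lemma ip_lorentz_diag_axis: "ip (lorentz_diag i0) (axis a 1) c = lorentz_sign i0 a * c $ a"
  by (simp add: ip_eq_inner inner_axis' lorentz_diag_def matrix_vector_mult_def
      if_distrib[of "\<lambda>x. x * _"] sum.delta cong: if_cong)

text \<open>In frame coordinates \<open>J(y)\<close> has the matrix \<open>D N\<close>, with \<open>D = lorentz_diag i0\<close> and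
  \<open>N\<^sub>a\<^sub>b = R(e\<^sub>a, y, y, e\<^sub>b)\<close>.\<close>

lemma trace_jacobi_square:
  assumes frame: "lorentz_frame G i0 p" and sym: "transpose G = G"
    and act: "algebraic_curvature_tensor T"
  shows "trace (jacobi G T (cvec y) ** jacobi G T (cvec y)) = complex_of_real
    (\<Sum>a\<in>UNIV. \<Sum>b\<in>UNIV. lorentz_sign i0 a * lorentz_sign i0 b * (tens T (p a) y y (p b))\<^sup>2)"
proof -
  define P where "P = frame_matrix p"
  define D where "D = lorentz_diag i0"
  define Mt where "Mt = transpose (curv_matrix T y)"
  define N where "N = transpose P ** Mt ** P"
  define X where "X = (P ** D ** transpose P) ** Mt"
  have "jacobi G T (cvec y) = cmat X"
    unfolding X_def P_def D_def Mt_def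
    by (rule jacobi_cvec[OF lorentz_frame_left_inverse[OF frame] sym])
  moreover have "trace (X ** X) = trace ((D ** N) ** (D ** N))"
  proof -
    have "trace (X ** X) = trace (P ** ((D ** transpose P ** Mt ** P ** D ** transpose P ** Mt)))"
      unfolding X_def by (simp add: matrix_mul_assoc)
    also have "\<dots> = trace ((D ** transpose P ** Mt ** P ** D ** transpose P ** Mt) ** P)"
      by (rule trace_mul_sym)
    finally show ?thesis
      unfolding N_def by (simp add: matrix_mul_assoc)
  qed
  moreover have "trace ((D ** N) ** (D ** N))
      = (\<Sum>a\<in>UNIV. \<Sum>b\<in>UNIV. lorentz_sign i0 a * lorentz_sign i0 b * (tens T (p a) y y (p b))\<^sup>2)"
  proof -
    have N: "N $ a $ b = tens T (p a) y y (p b)" for a b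
      unfolding N_def P_def frame_gram_entry Mt_def ip_transpose tens_eq_ip_curv_matrix[symmetric]
      by (rule act_jacobi_sym[OF act])
    have "trace ((D ** N) ** (D ** N)) = (\<Sum>a\<in>UNIV. \<Sum>b\<in>UNIV. (D ** N) $ a $ b * (D ** N) $ b $ a)"
      by (simp add: trace_def matrix_matrix_mult_def)
    then show ?thesis
      unfolding D_def lorentz_diag_mult N
      by (simp add: act_jacobi_sym[OF act, of "p _" y "p _"] power2_eq_square ac_simps)
  qed
  ultimately show ?thesis
    by (simp only: trace_cmat flip: cmat_mult)
qed

lemma sum_lorentz_sign_cancel:
  fixes f :: "'n::finite \<Rightarrow> real"
  assumes "i1 \<noteq> i0" and "f i0 = f i1"
  shows "(\<Sum>a\<in>UNIV. lorentz_sign i0 a * f a) = (\<Sum>a\<in>-{i0, i1}. f a)"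
proof -
  have "(\<Sum>a\<in>UNIV. lorentz_sign i0 a * f a)
      = (\<Sum>a\<in>{i0, i1}. lorentz_sign i0 a * f a) + (\<Sum>a\<in>-{i0, i1}. lorentz_sign i0 a * f a)"
    by (subst sum.union_disjoint[symmetric]) (auto intro: sum.cong)
  also have "\<dots> = (\<Sum>a\<in>-{i0, i1}. f a)"
    using assms by (simp add: lorentz_sign_def)
  finally show ?thesis .
qed

text \<open>For the null vector \<open>y = e\<^sub>i\<^sub>0 + e\<^sub>i\<^sub>1\<close>, the identity \<open>R(y, y, \<cdot>, \<cdot>) = 0\<close> makes the rows
  \<open>i0\<close>, \<open>i1\<close> of \<open>R(e\<^sub>a, y, y, e\<^sub>b)\<close> opposite, and likewise the columns; as they carry opposite
  signs, they cancel in \<open>trace (J(y)\<^sup>2)\<close>, which becomes a sum of squares.\<close>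

lemma trace_jacobi_square_null_frame_vector:
  assumes frame: "lorentz_frame G i0 p" and sym: "transpose G = G"
    and act: "algebraic_curvature_tensor T" and "i1 \<noteq> i0"
  defines "y \<equiv> p i0 + p i1"
  shows "trace (jacobi G T (cvec y) ** jacobi G T (cvec y))
    = complex_of_real (\<Sum>a\<in>-{i0, i1}. \<Sum>b\<in>-{i0, i1}. (tens T (p a) y y (p b))\<^sup>2)"
proof -
  define m where "m a b = tens T (p a) y y (p b)" for a b
  have rows: "m i0 b = - m i1 b" for b
    using act_zero12[OF act, of y y "p b"] by (simp add: m_def y_def tens_add1 eq_neg_iff_add_eq_0)
  have columns: "m a i0 = - m a i1" for a
    using act_zero34[OF act, of "p a" y y] by (simp add: m_def y_def tens_add4 eq_neg_iff_add_eq_0)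
  have "(\<Sum>a\<in>UNIV. \<Sum>b\<in>UNIV. lorentz_sign i0 a * lorentz_sign i0 b * (m a b)\<^sup>2)
      = (\<Sum>a\<in>UNIV. lorentz_sign i0 a * (\<Sum>b\<in>UNIV. lorentz_sign i0 b * (m a b)\<^sup>2))"
    by (simp add: sum_distrib_left mult.assoc)
  also have "\<dots> = (\<Sum>a\<in>UNIV. lorentz_sign i0 a * (\<Sum>b\<in>-{i0, i1}. (m a b)\<^sup>2))"
    using columns \<open>i1 \<noteq> i0\<close> by (simp add: sum_lorentz_sign_cancel)
  also have "\<dots> = (\<Sum>a\<in>-{i0, i1}. \<Sum>b\<in>-{i0, i1}. (m a b)\<^sup>2)"
    using rows \<open>i1 \<noteq> i0\<close> by (simp add: sum_lorentz_sign_cancel)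
  finally show ?thesis
    using trace_jacobi_square[OF frame sym act, of y] by (simp add: m_def)
qed

lemma null_frame_vector_sectional_zero:
  assumes frame: "lorentz_frame G i0 p" and sym: "transpose G = G"
    and act: "algebraic_curvature_tensor T" and "i1 \<noteq> i0"
  defines "y \<equiv> p i0 + p i1"
  assumes trace_zero: "trace (jacobi G T (cvec y) ** jacobi G T (cvec y)) = 0"
    and orthogonal: "ip G y w = 0"
  shows "tens T w y y w = 0"
proof -
  let ?S = "-{i0, i1}"
  have transverse: "tens T (p a) y y (p b) = 0" if "a \<in> ?S" "b \<in> ?S" for a b
  proof -
    have "(\<Sum>a\<in>?S. \<Sum>b\<in>?S. (tens T (p a) y y (p b))\<^sup>2) = 0"
      using trace_jacobi_square_null_frame_vector[OF frame sym act \<open>i1 \<noteq> i0\<close>] trace_zero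
      unfolding y_def by (metis of_real_eq_0_iff)
    then show ?thesis
      using that by (simp add: sum_nonneg_eq_0_iff sum_nonneg)
  qed
  obtain c where w: "w = frame_matrix p *v c"
    using frame by (rule lorentz_frame_spans)
  have ip_frame_w: "ip G (p a) w = lorentz_sign i0 a * c $ a" for a
    using lorentz_frame_ip[OF frame, of "axis a 1" c]
    by (simp add: w frame_matrix_axis ip_lorentz_diag_axis)
  have "c $ i0 = c $ i1"
    using orthogonal ip_frame_w[of i0] ip_frame_w[of i1] \<open>i1 \<noteq> i0\<close>
    by (simp add: y_def ip_add_left lorentz_sign_def)
  define w' where "w' = (\<Sum>a\<in>?S. c $ a *\<^sub>R p a)"
  have "w = w' + c $ i0 *\<^sub>R y"
  proof -
    have "w = (\<Sum>a\<in>{i0, i1}. c $ a *\<^sub>R p a) + w'"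
      unfolding w frame_matrix_mult w'_def
      by (subst sum.union_disjoint[symmetric]) (auto intro: sum.cong)
    with \<open>c $ i0 = c $ i1\<close> \<open>i1 \<noteq> i0\<close> show ?thesis
      by (simp add: y_def scaleR_add_right)
  qed
  then have "tens T w y y w = tens T w' y y w'"
    using act_jacobi_shift[OF act] by metis
  also have "\<dots> = (\<Sum>b\<in>?S. \<Sum>a\<in>?S. c $ a * c $ b * tens T (p a) y y (p b))"
    by (simp add: w'_def tens_sum1 tens_sum4 tens_scaleR1 tens_scaleR4 sum_distrib_left mult_ac)
  also have "\<dots> = 0"
    by (simp add: transverse)
  finally show ?thesis .
qed

definition reflection :: "real^'n::finite^'n \<Rightarrow> real^'n \<Rightarrow> real^'n \<Rightarrow> real^'n" where
  "reflection G v z = z - (2 * ip G z v / ip G v v) *\<^sub>R v"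

lemma ip_reflection:
  assumes "transpose G = G" and "ip G v v \<noteq> 0"
  shows "ip G (reflection G v z) (reflection G v z') = ip G z z'"
proof -
  define a where "a = 2 * ip G z v / ip G v v"
  define b where "b = 2 * ip G z' v / ip G v v"
  have "ip G (z - a *\<^sub>R v) (z' - b *\<^sub>R v)
      = ip G z z' - b * ip G z v - a * ip G z' v + a * b * ip G v v"
    using ip_sym[OF assms(1), of v z']
    by (simp add: ip_diff_left ip_diff_right ip_scaleR_left ip_scaleR_right algebra_simps)
  also have "\<dots> = ip G z z'"
    using assms(2) by (simp add: a_def b_def field_simps)
  finally show ?thesis
    by (simp add: reflection_def a_def b_def)
qed

lemma reflection_orthogonal: "ip G z v = 0 \<Longrightarrow> reflection G v z = z"
  by (simp add: reflection_def)

lemma reflection_swap: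
  assumes "transpose G = G" and "ip G a a = ip G b b" and "ip G (a - b) (a - b) \<noteq> 0"
  shows "reflection G (a - b) a = b"
proof -
  have "ip G (a - b) (a - b) = 2 * ip G a (a - b)"
    using assms(1,2) ip_sym[OF assms(1), of b a] by (simp add: ip_diff_left ip_diff_right)
  then show ?thesis
    using assms(3) by (simp add: reflection_def)
qed

lemma lorentz_frame_reflection:
  assumes "lorentz_frame G i0 p" and "transpose G = G" and "ip G v v \<noteq> 0"
  shows "lorentz_frame G i0 (\<lambda>a. reflection G v (p a))"
  using assms by (simp add: lorentz_frame_def ip_reflection)

text \<open>Normalize \<open>x\<close> to \<open>e\<^sub>i\<^sub>0 + u\<close> with a unit vector \<open>u \<bottom> e\<^sub>i\<^sub>0\<close>, then reflect \<open>e\<^sub>i\<^sub>1\<close> to \<open>u\<close> across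
  \<open>e\<^sub>i\<^sub>1 - u\<close>.\<close>

lemma null_vector_frame:
  assumes lorentzian: "lorentzian G" and frame: "lorentz_frame G i0 p" and "i1 \<noteq> i0"
    and null: "ip G x x = 0" and "x \<noteq> 0"
  obtains p' k where "lorentz_frame G i0 p'" and "x = k *\<^sub>R (p' i0 + p' i1)"
proof -
  have sym: "transpose G = G"
    using lorentzian by (simp add: lorentzian_def)
  have p: "ip G (p i0) (p i0) = -1" "ip G (p i1) (p i1) = 1" "ip G (p i0) (p i1) = 0"
    using frame \<open>i1 \<noteq> i0\<close> by (simp_all add: lorentz_frame_def lorentz_sign_def)
  define \<xi> where "\<xi> = - ip G (p i0) x"
  have "\<xi> \<noteq> 0"
    using lorentzian_orthogonal_timelike[OF lorentzian, of "p i0" x] p null \<open>x \<noteq> 0\<close>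
    by (auto simp: \<xi>_def)
  define u where "u = (1 / \<xi>) *\<^sub>R x - p i0"
  have x: "x = \<xi> *\<^sub>R (p i0 + u)"
    using \<open>\<xi> \<noteq> 0\<close> by (simp add: u_def)
  have u: "ip G (p i0) u = 0" "ip G u u = 1"
    using \<open>\<xi> \<noteq> 0\<close> p null
    by (simp_all add: u_def \<xi>_def ip_diff_left ip_diff_right ip_scaleR_left ip_scaleR_right
        ip_minus_left ip_minus_right ip_sym[OF sym, of x "p i0"])
  show ?thesis
  proof (cases "u = p i1")
    case True
    then show ?thesis
      using frame x that by blast
  next
    case False
    define v where "v = p i1 - u"
    have "ip G v v > 0"
      using lorentzian_orthogonal_timelike[OF lorentzian, of "p i0" v] p u False
      by (simp add: v_def ip_diff_right)
    then have "lorentz_frame G i0 (\<lambda>a. reflection G v (p a))"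
      using frame sym by (simp add: lorentz_frame_reflection)
    moreover have "reflection G v (p i0) = p i0"
      using p u by (simp add: reflection_orthogonal v_def ip_diff_right)
    moreover have "reflection G v (p i1) = u"
      using reflection_swap[OF sym] p u \<open>ip G v v > 0\<close> by (simp add: v_def)
    ultimately show ?thesis
      using x that by metis
  qed
qed

lemma ex_not_in_of_card_less: "card (A :: 'a::finite set) < CARD('a) \<Longrightarrow> \<exists>i. i \<notin> A"
  by (metis UNIV_eq_I less_irrefl)

lemma null_sectional_zero:
  fixes G :: "real^'n^'n"
  assumes "CARD('n) \<ge> 2" and lorentzian: "lorentzian G"
    and act: "algebraic_curvature_tensor T"
    and trace_null: "\<forall>x \<in> null_cone G. trace (jacobi G T x ** jacobi G T x) = 0"
    and null: "ip G x x = 0" and orthogonal: "ip G x w = 0"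
  shows "tens T w x x w = 0"
proof (cases "x = 0")
  case True
  then show ?thesis
    by (simp add: tens_zero2)
next
  case False
  obtain i0 p where frame: "lorentz_frame G i0 p"
    using lorentzian by (rule lorentzian_imp_frame)
  obtain i1 where "i1 \<noteq> i0"
    using ex_not_in_of_card_less[of "{i0}"] \<open>CARD('n) \<ge> 2\<close> by auto
  obtain p' k where frame': "lorentz_frame G i0 p'" and x: "x = k *\<^sub>R (p' i0 + p' i1)"
    using null_vector_frame[OF lorentzian frame \<open>i1 \<noteq> i0\<close> null False] .
  have sym: "transpose G = G"
    using lorentzian by (simp add: lorentzian_def)
  have "ip G (p' i0 + p' i1) (p' i0 + p' i1) = 0"
    using frame' \<open>i1 \<noteq> i0\<close>
    by (simp add: lorentz_frame_def lorentz_sign_def ip_add_left ip_add_right)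
  then have trace_zero:
    "trace (jacobi G T (cvec (p' i0 + p' i1)) ** jacobi G T (cvec (p' i0 + p' i1))) = 0"
    using trace_null by (simp add: null_cone_def cip_cvec)
  have "k \<noteq> 0"
    using False x by auto
  then have "ip G (p' i0 + p' i1) w = 0"
    using orthogonal x by (simp add: ip_scaleR_left)
  with trace_zero have "tens T w (p' i0 + p' i1) (p' i0 + p' i1) w = 0"
    by (rule null_frame_vector_sectional_zero[OF frame' sym act \<open>i1 \<noteq> i0\<close>])
  then show ?thesis
    by (simp add: x tens_scaleR2 tens_scaleR3)
qed

text \<open>If \<open>\<tau>\<close> is timelike and \<open>x \<bottom> \<tau>\<close>, then \<open>r \<tau> \<plusminus> x\<close> are null for \<open>r = |x| / |\<tau>|\<close>; applying the
  hypothesis to both and adding resp. subtracting gives the two identities.\<close>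

lemma null_sectional_orthogonal_pair:
  assumes lorentzian: "lorentzian G"
    and null_sectional: "\<And>x w. ip G x x = 0 \<Longrightarrow> ip G x w = 0 \<Longrightarrow> tens T w x x w = 0"
    and timelike: "ip G \<tau> \<tau> < 0" and "ip G \<tau> w = 0" and "ip G \<tau> x = 0" and "ip G x w = 0"
  shows "tens T w x x w * ip G \<tau> \<tau> = tens T w \<tau> \<tau> w * ip G x x"
    and "tens T w \<tau> x w + tens T w x \<tau> w = 0"
proof -
  have x_pos: "x \<noteq> 0 \<Longrightarrow> ip G x x > 0"
    using lorentzian_orthogonal_timelike[OF lorentzian timelike \<open>ip G \<tau> x = 0\<close>] .
  then have "ip G x x \<ge> 0"
    by (cases "x = 0") (auto simp: ip_eq_inner)
  define r where "r = sqrt (ip G x x / - ip G \<tau> \<tau>)"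
  have "r\<^sup>2 = ip G x x / - ip G \<tau> \<tau>"
    unfolding r_def using \<open>ip G x x \<ge> 0\<close> timelike by (intro real_sqrt_pow2 divide_nonneg_pos) auto
  then have r: "r\<^sup>2 * ip G \<tau> \<tau> = - ip G x x"
    using timelike by simp
  have x_\<tau>: "ip G x \<tau> = 0"
    using \<open>ip G \<tau> x = 0\<close> lorentzian_ip_sym[OF lorentzian] by metis
  have "r\<^sup>2 * tens T w \<tau> \<tau> w + r * s * (tens T w \<tau> x w + tens T w x \<tau> w) + tens T w x x w = 0"
    if "s\<^sup>2 = 1" for s
  proof -
    have "ip G (r *\<^sub>R \<tau> + s *\<^sub>R x) (r *\<^sub>R \<tau> + s *\<^sub>R x) = 0"
      using r that by (simp add: ip_quadratic \<open>ip G \<tau> x = 0\<close> x_\<tau>)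
    moreover have "ip G (r *\<^sub>R \<tau> + s *\<^sub>R x) w = 0"
      using \<open>ip G \<tau> w = 0\<close> \<open>ip G x w = 0\<close> by (simp add: ip_add_left ip_scaleR_left)
    ultimately have "tens T w (r *\<^sub>R \<tau> + s *\<^sub>R x) (r *\<^sub>R \<tau> + s *\<^sub>R x) w = 0"
      by (rule null_sectional)
    then show ?thesis
      using that by (simp add: tens_quadratic23)
  qed
  from this[of 1] this[of "-1"]
  have sum: "r\<^sup>2 * tens T w \<tau> \<tau> w + tens T w x x w = 0"
    and diff: "r * (tens T w \<tau> x w + tens T w x \<tau> w) = 0"
    by (simp_all add: algebra_simps)
  have "tens T w x x w * ip G \<tau> \<tau> = tens T w \<tau> \<tau> w * - (r\<^sup>2 * ip G \<tau> \<tau>)"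
    using sum by (simp add: algebra_simps add_eq_0_iff)
  then show "tens T w x x w * ip G \<tau> \<tau> = tens T w \<tau> \<tau> w * ip G x x"
    by (simp only: r minus_minus)
  show "tens T w \<tau> x w + tens T w x \<tau> w = 0"
  proof (cases "r = 0")
    case True
    then have "ip G x x = 0"
      using r by simp
    then have "x = 0"
      using x_pos by (metis less_irrefl)
    then show ?thesis
      by (simp add: tens_zero2 tens_zero3)
  next
    case False
    with diff show ?thesis
      by simp
  qed
qed

lemma null_sectional_orthogonal:
  assumes lorentzian: "lorentzian G"
    and null_sectional: "\<And>x w. ip G x x = 0 \<Longrightarrow> ip G x w = 0 \<Longrightarrow> tens T w x x w = 0"
    and timelike: "ip G \<tau> \<tau> < 0" and "ip G \<tau> w = 0" and "ip G x w = 0"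
  shows "tens T w x x w * ip G \<tau> \<tau> = tens T w \<tau> \<tau> w * ip G x x"
proof -
  have sym: "ip G u v = ip G v u" for u v
    using lorentzian by (rule lorentzian_ip_sym)
  define a where "a = ip G x \<tau> / ip G \<tau> \<tau>"
  define x' where "x' = x - a *\<^sub>R \<tau>"
  have x: "x = a *\<^sub>R \<tau> + 1 *\<^sub>R x'"
    by (simp add: x'_def)
  have "ip G \<tau> x' = 0" "ip G x' \<tau> = 0"
    using timelike sym[of \<tau> x] sym[of x' \<tau>]
    by (simp_all add: x'_def a_def ip_diff_right ip_scaleR_right)
  moreover have "ip G x' w = 0"
    using \<open>ip G \<tau> w = 0\<close> \<open>ip G x w = 0\<close> by (simp add: x'_def ip_diff_left ip_scaleR_left)
  ultimately have x': "tens T w x' x' w * ip G \<tau> \<tau> = tens T w \<tau> \<tau> w * ip G x' x'"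
    and cross: "tens T w \<tau> x' w + tens T w x' \<tau> w = 0"
    using null_sectional_orthogonal_pair[OF lorentzian null_sectional timelike \<open>ip G \<tau> w = 0\<close>]
    by blast+
  have "tens T w x x w = a\<^sup>2 * tens T w \<tau> \<tau> w + tens T w x' x' w"
    using cross by (subst (1 2) x, simp only: tens_quadratic23) simp
  moreover have "ip G x x = a\<^sup>2 * ip G \<tau> \<tau> + ip G x' x'"
    using \<open>ip G \<tau> x' = 0\<close> \<open>ip G x' \<tau> = 0\<close> by (subst (1 2) x, simp only: ip_quadratic) simp
  ultimately show ?thesis
    using x' by (simp add: algebra_simps)
qed

lemma null_sectional_spacelike:
  assumes lorentzian: "lorentzian G" and act: "algebraic_curvature_tensor T"
    and null_sectional: "\<And>x w. ip G x x = 0 \<Longrightarrow> ip G x w = 0 \<Longrightarrow> tens T w x x w = 0"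
    and spacelike: "ip G w w > 0" and timelike: "ip G \<tau> \<tau> < 0" and "ip G \<tau> w = 0"
  shows "tens T w x x w * ip G \<tau> \<tau> * ip G w w
    = tens T w \<tau> \<tau> w * (ip G x x * ip G w w - (ip G x w)\<^sup>2)"
proof -
  define k where "k = ip G x w / ip G w w"
  define x' where "x' = 1 *\<^sub>R x + (- k) *\<^sub>R w"
  have "ip G x' w = 0"
    using spacelike by (simp add: x'_def k_def ip_diff_left ip_scaleR_left)
  have "tens T w x' x' w * ip G \<tau> \<tau> = tens T w \<tau> \<tau> w * ip G x' x'"
    using null_sectional_orthogonal[OF lorentzian null_sectional timelike]
      \<open>ip G \<tau> w = 0\<close> \<open>ip G x' w = 0\<close> by blast
  moreover have "tens T w x' x' w = tens T w x x w"
    unfolding x'_def tens_quadratic23 by (simp add: act_zero12[OF act] act_zero34[OF act])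
  moreover have "ip G x' x' * ip G w w = ip G x x * ip G w w - (ip G x w)\<^sup>2"
    unfolding x'_def ip_quadratic
    using spacelike lorentzian_ip_sym[OF lorentzian, of w x]
    by (simp add: k_def power2_eq_square field_simps)
  ultimately show ?thesis
    by (metis mult.assoc)
qed

lemma lorentzian_orthogonal_timelike_exists:
  fixes G :: "real^'n::finite^'n"
  assumes lorentzian: "lorentzian G" and spacelike: "ip G w w > 0"
  obtains \<tau> where "ip G \<tau> \<tau> < 0" and "ip G \<tau> w = 0"
proof -
  obtain i0 p where "lorentz_frame G i0 p"
    using lorentzian by (rule lorentzian_imp_frame)
  then have e: "ip G (p i0) (p i0) = -1"
    by (simp add: lorentz_frame_def lorentz_sign_def)
  define \<tau> where "\<tau> = ip G w w *\<^sub>R p i0 + (- ip G (p i0) w) *\<^sub>R w"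
  have "ip G \<tau> w = 0"
    by (simp add: \<tau>_def ip_diff_left ip_scaleR_left)
  moreover have "ip G \<tau> \<tau> = - (ip G w w)\<^sup>2 - ip G w w * (ip G (p i0) w)\<^sup>2"
    unfolding \<tau>_def ip_quadratic using lorentzian_ip_sym[OF lorentzian, of w "p i0"]
    by (simp add: e power2_eq_square algebra_simps)
  moreover have "(ip G w w)\<^sup>2 > 0" and "ip G w w * (ip G (p i0) w)\<^sup>2 \<ge> 0"
    using spacelike by simp_all
  ultimately have "ip G \<tau> \<tau> < 0"
    by linarith
  then show ?thesis
    using that \<open>ip G \<tau> w = 0\<close> by blast
qed

lemma null_sectional_spacelike_factor:
  fixes G :: "real^'n::finite^'n"
  assumes lorentzian: "lorentzian G" and act: "algebraic_curvature_tensor T"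
    and null_sectional: "\<And>x w. ip G x x = 0 \<Longrightarrow> ip G x w = 0 \<Longrightarrow> tens T w x x w = 0"
    and spacelike: "ip G w w > 0"
  shows "\<exists>\<mu>. \<forall>x. tens T w x x w = \<mu> * (ip G x x * ip G w w - (ip G x w)\<^sup>2)"
proof -
  obtain \<tau> where timelike: "ip G \<tau> \<tau> < 0" and "ip G \<tau> w = 0"
    using lorentzian spacelike by (rule lorentzian_orthogonal_timelike_exists)
  have "ip G \<tau> \<tau> * ip G w w \<noteq> 0"
    using timelike spacelike by simp
  then show ?thesis
    using null_sectional_spacelike[OF lorentzian act null_sectional spacelike timelike]
      \<open>ip G \<tau> w = 0\<close>
    by (intro exI[of _ "tens T w \<tau> \<tau> w / (ip G \<tau> \<tau> * ip G w w)"]) (simp add: field_simps)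
qed

lemma sectional_factor_unique:
  assumes lorentzian: "lorentzian G" and act: "algebraic_curvature_tensor T"
    and u: "\<And>x. tens T u x x u = \<mu> * (ip G x x * ip G u u - (ip G x u)\<^sup>2)"
    and v: "\<And>x. tens T v x x v = \<nu> * (ip G x x * ip G v v - (ip G x v)\<^sup>2)"
    and "ip G u u * ip G v v - (ip G u v)\<^sup>2 \<noteq> 0"
  shows "\<mu> = \<nu>"
proof -
  let ?D = "ip G u u * ip G v v - (ip G u v)\<^sup>2"
  have "ip G v v * ip G u u - (ip G v u)\<^sup>2 = ?D"
    using lorentzian_ip_sym[OF lorentzian, of u v] by (simp add: mult.commute)
  then have "\<mu> * ?D = \<nu> * ?D"
    using u[of v] v[of u] act_pair_sym[OF act, of u v v u] by simp
  with assms(5) show ?thesis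
    by simp
qed

text \<open>Every spacelike \<open>w\<close> spans a nondegenerate plane with \<open>e\<^sub>1\<close>, \<open>e\<^sub>2\<close> or \<open>e\<^sub>1 + e\<^sub>2\<close>, so
  \<open>sectional_factor_unique\<close> links its factor to that of \<open>e\<^sub>1\<close>.  This is where \<open>dim V \<ge> 3\<close>
  enters.\<close>

lemma null_sectional_constant_on_spacelike:
  fixes G :: "real^'n::finite^'n"
  assumes lorentzian: "lorentzian G" and act: "algebraic_curvature_tensor T"
    and null_sectional: "\<And>x w. ip G x x = 0 \<Longrightarrow> ip G x w = 0 \<Longrightarrow> tens T w x x w = 0"
    and e: "ip G e1 e1 = 1" "ip G e2 e2 = 1" "ip G e1 e2 = 0"
  obtains c where "\<And>w x. ip G w w > 0 \<Longrightarrow> tens T w x x w = c * (ip G x x * ip G w w - (ip G x w)\<^sup>2)"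
proof -
  have sym: "ip G u v = ip G v u" for u v
    using lorentzian by (rule lorentzian_ip_sym)
  obtain \<mu> where \<mu>: "\<And>w x. ip G w w > 0 \<Longrightarrow>
      tens T w x x w = \<mu> w * (ip G x x * ip G w w - (ip G x w)\<^sup>2)"
    using null_sectional_spacelike_factor[OF lorentzian act null_sectional] by metis
  have same: "\<mu> u = \<mu> v"
    if "ip G u u > 0" "ip G v v > 0" "ip G u u * ip G v v - (ip G u v)\<^sup>2 \<noteq> 0" for u v
    using sectional_factor_unique[OF lorentzian act \<mu>[OF that(1)] \<mu>[OF that(2)] that(3)] .
  have "\<mu> w = \<mu> e1" if w: "ip G w w > 0" for w
  proof -
    have e12: "ip G (e1 + e2) (e1 + e2) = 2" "ip G e1 (e1 + e2) = 1"
      using e sym[of e2 e1] by (simp_all add: ip_add_left ip_add_right)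
    have "\<mu> e2 = \<mu> e1" and "\<mu> (e1 + e2) = \<mu> e1"
      using e e12 sym[of e2 e1] sym[of "e1 + e2" e1] by (simp_all add: same)
    consider (e1) "ip G w w * 1 - (ip G w e1)\<^sup>2 \<noteq> 0"
      | (e2) "ip G w w * 1 - (ip G w e2)\<^sup>2 \<noteq> 0"
      | (e12) "ip G w w * 2 - (ip G w (e1 + e2))\<^sup>2 \<noteq> 0"
    proof (rule ccontr)
      assume "\<not> thesis"
      with that have "ip G w w = (ip G w e1)\<^sup>2" "ip G w w = (ip G w e2)\<^sup>2"
        "ip G w w * 2 = (ip G w e1 + ip G w e2)\<^sup>2"
        by (auto simp: ip_add_right)
      then have "ip G w e1 * ip G w e2 = 0"
        by (simp add: power2_eq_square algebra_simps)
      with \<open>ip G w w = (ip G w e1)\<^sup>2\<close> \<open>ip G w w = (ip G w e2)\<^sup>2\<close> w show False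
        by auto
    qed
    then show ?thesis
      using w e e12 \<open>\<mu> e2 = \<mu> e1\<close> \<open>\<mu> (e1 + e2) = \<mu> e1\<close>
        same[of w e1] same[of w e2] same[of w "e1 + e2"]
      by cases simp_all
  qed
  then show ?thesis
    using \<mu> that by metis
qed

lemma quadratic_eq_0_for_large:
  fixes a b c :: real
  assumes "\<And>t. t \<ge> T \<Longrightarrow> a + b * t + c * t\<^sup>2 = 0"
  shows "a = 0"
proof -
  define t where "t = max T 1"
  have "t > 0" and "t \<ge> T" "2 * t \<ge> T" "3 * t \<ge> T"
    by (auto simp: t_def)
  then have "a + b * t + c * t\<^sup>2 = 0" "a + b * (2 * t) + c * (2 * t)\<^sup>2 = 0"
    "a + b * (3 * t) + c * (3 * t)\<^sup>2 = 0"
    using assms by blast+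
  then show ?thesis
    by (simp add: power2_eq_square algebra_simps)
qed

lemma quadratic_pos_for_large:
  fixes a b t :: real
  assumes t: "t \<ge> \<bar>a\<bar> + \<bar>b\<bar> + 1"
  shows "a + b * t + t\<^sup>2 > 0"
proof -
  from t have "t\<^sup>2 \<ge> t * (\<bar>a\<bar> + \<bar>b\<bar> + 1)"
    by (simp add: power2_eq_square mult_left_mono)
  moreover have "1 \<le> t"
    using t by simp
  then have "\<bar>a\<bar> \<le> t * \<bar>a\<bar>" and "- b * t \<le> \<bar>b\<bar> * t"
    using mult_right_mono[of 1 t "\<bar>a\<bar>"] mult_right_mono[of "- b" "\<bar>b\<bar>" t] by simp_all
  ultimately show ?thesis
    using t by (simp add: algebra_simps)
qed

text \<open>The identity extends from spacelike \<open>w\<close> to all \<open>w\<close>: both sides are quadratic in \<open>w\<close>, and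
  \<open>w + t e\<^sub>1\<close> is spacelike for all large \<open>t\<close>.\<close>

lemma null_sectional_constant:
  fixes G :: "real^'n::finite^'n"
  assumes lorentzian: "lorentzian G" and act: "algebraic_curvature_tensor T"
    and null_sectional: "\<And>x w. ip G x x = 0 \<Longrightarrow> ip G x w = 0 \<Longrightarrow> tens T w x x w = 0"
    and e: "ip G e1 e1 = 1" "ip G e2 e2 = 1" "ip G e1 e2 = 0"
  obtains c where "\<And>w x. tens T w x x w = c * (ip G x x * ip G w w - (ip G x w)\<^sup>2)"
proof -
  obtain c where c: "\<And>w x. ip G w w > 0 \<Longrightarrow> tens T w x x w = c * (ip G x x * ip G w w - (ip G x w)\<^sup>2)"
    using null_sectional_constant_on_spacelike[OF lorentzian act null_sectional e] by blast
  have "tens T w x x w = c * (ip G x x * ip G w w - (ip G x w)\<^sup>2)" for w x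
  proof -
    define g where "g v = tens T v x x v - c * (ip G x x * ip G v v - (ip G x v)\<^sup>2)" for v
    define \<alpha> where "\<alpha> = tens T w x x e1 + tens T e1 x x w
      - c * (ip G x x * (ip G w e1 + ip G e1 w) - 2 * ip G x w * ip G x e1)"
    define \<gamma> where "\<gamma> = tens T e1 x x e1 - c * (ip G x x * ip G e1 e1 - (ip G x e1)\<^sup>2)"
    have "g w + \<alpha> * t + \<gamma> * t\<^sup>2 = 0" if "t \<ge> \<bar>ip G w w\<bar> + \<bar>2 * ip G w e1\<bar> + 1" for t
    proof -
      have "ip G (1 *\<^sub>R w + t *\<^sub>R e1) (1 *\<^sub>R w + t *\<^sub>R e1) = ip G w w + 2 * ip G w e1 * t + t\<^sup>2"
        unfolding ip_quadratic using e lorentzian_ip_sym[OF lorentzian, of e1 w] by simp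
      then have "g (1 *\<^sub>R w + t *\<^sub>R e1) = 0"
        using quadratic_pos_for_large[OF that] c by (simp add: g_def)
      moreover have "g (1 *\<^sub>R w + t *\<^sub>R e1) = g w + \<alpha> * t + \<gamma> * t\<^sup>2"
        unfolding g_def \<alpha>_def \<gamma>_def tens_quadratic14 ip_quadratic
        by (simp add: ip_add_right ip_scaleR_right power2_eq_square algebra_simps)
      ultimately show ?thesis
        by simp
    qed
    then have "g w = 0"
      by (rule quadratic_eq_0_for_large)
    then show ?thesis
      by (simp add: g_def)
  qed
  then show ?thesis ..
qed

lemma null_sectional_constant_curvature:
  fixes G :: "real^'n::finite^'n"
  assumes lorentzian: "lorentzian G" and act: "algebraic_curvature_tensor T"
    and null_sectional: "\<And>x w. ip G x x = 0 \<Longrightarrow> ip G x w = 0 \<Longrightarrow> tens T w x x w = 0"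
    and e: "ip G e1 e1 = 1" "ip G e2 e2 = 1" "ip G e1 e2 = 0"
  shows "\<exists>c. \<forall>x y z w. tens T x y z w = c * (ip G x w * ip G y z - ip G x z * ip G y w)"
proof -
  have sym: "ip G u v = ip G v u" for u v
    using lorentzian by (rule lorentzian_ip_sym)
  obtain c where c: "\<And>w x. tens T w x x w = c * (ip G x x * ip G w w - (ip G x w)\<^sup>2)"
    using null_sectional_constant[OF lorentzian act null_sectional e] by blast
  define S where "S x y z w = tens T x y z w - c * (ip G x w * ip G y z - ip G x z * ip G y w)"
    for x y z w
  have "S x y z w = 0" for x y z w
  proof (rule curvature_form_eq_0[where S = S])
    show "S x y z w = - S y x z w" for x y z w
      using act_antisym12[OF act, of x y z w] by (simp add: S_def algebra_simps)
    show "S x y z w = S z w x y" for x y z w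
      using act_pair_sym[OF act, of x y z w] sym[of z y] sym[of w x] sym[of z x] sym[of w y]
      by (simp add: S_def algebra_simps)
    show "S x y z w + S y z x w + S z x y w = 0" for x y z w
      using act_bianchi[OF act, of x y z w] sym[of z x] sym[of y x] sym[of z y]
      by (simp add: S_def algebra_simps)
    show "S (x + x') y z w = S x y z w + S x' y z w" for x x' y z w
      by (simp add: S_def tens_add1 ip_add_left algebra_simps)
    show "S x (y + y') z w = S x y z w + S x y' z w" for x y y' z w
      by (simp add: S_def tens_add2 ip_add_left algebra_simps)
    show "S x y (z + z') w = S x y z w + S x y z' w" for x y z z' w
      by (simp add: S_def tens_add3 ip_add_right algebra_simps)
    show "S x y z (w + w') = S x y z w + S x y z w'" for x y z w w'
      by (simp add: S_def tens_add4 ip_add_right algebra_simps)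
    show "S w x x w = 0" for x w
      using c[of w x] sym[of x w] by (simp add: S_def power2_eq_square algebra_simps)
  qed
  then show ?thesis
    by (auto simp: S_def)
qed

lemma lorentzian_spacelike_pair:
  fixes G :: "real^'n^'n"
  assumes "CARD('n) \<ge> 3" and "lorentzian G"
  obtains e1 e2 where "ip G e1 e1 = 1" and "ip G e2 e2 = 1" and "ip G e1 e2 = 0"
proof -
  obtain i0 p where frame: "lorentz_frame G i0 p"
    using assms(2) by (rule lorentzian_imp_frame)
  obtain i1 where "i1 \<notin> {i0}"
    using ex_not_in_of_card_less[of "{i0}"] assms(1) by auto
  moreover have "card {i0, i1} \<le> 2"
    by (simp add: card_insert_if)
  then obtain i2 where "i2 \<notin> {i0, i1}"
    using ex_not_in_of_card_less[of "{i0, i1}"] assms(1) by fastforce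
  ultimately show ?thesis
    using frame that[of "p i1" "p i2"] by (auto simp: lorentz_frame_def lorentz_sign_def)
qed

theorem theorem1p2:
  fixes G :: "real^'n^'n" and T :: "'n \<Rightarrow> 'n \<Rightarrow> 'n \<Rightarrow> 'n \<Rightarrow> real"
  assumes "CARD('n) \<ge> 3"
    and "lorentzian G"
    and "algebraic_curvature_tensor T"
    and "\<forall>x \<in> null_cone G. trace (jacobi G T x ** jacobi G T x) = 0"
  shows "\<exists>c::real. \<forall>x y z w. tens T x y z w = c * (ip G x w * ip G y z - ip G x z * ip G y w)"
proof -
  have "CARD('n) \<ge> 2"
    using assms(1) by simp
  then have null_sectional: "\<And>x w. ip G x x = 0 \<Longrightarrow> ip G x w = 0 \<Longrightarrow> tens T w x x w = 0"
    using null_sectional_zero assms(2-4) by blast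
  obtain e1 e2 where "ip G e1 e1 = 1" "ip G e2 e2 = 1" "ip G e1 e2 = 0"
    using assms(1,2) by (rule lorentzian_spacelike_pair)
  then show ?thesis
    using null_sectional_constant_curvature[OF assms(2,3) null_sectional] by blast
qed

end
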